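(* For any $\varepsilon\in(0,1)$, $\delta>0$ and $\tau>0$ there is a CTMC $\mathcal{M}=(S,P,E,s_{init},L)$ with states $s,s'$ such that $\{s,s'\}$ is a block of a $\tau$-quasi-lumpability $\Omega$ of $\mathcal{M}$, but the pair $(s,s')$ satisfies neither the $\delta$-condition $|\ln E(s)-\ln E(s')|\leq\delta$ nor the $\varepsilon$-condition (for all $A\subseteq S$: $P(s,A)\leq P(s',R(A))+\varepsilon$) with respect to the equivalence relation $R$ induced by $\Omega$.
   Context: A CTMC $(S,P,E,s_{init},L)$: finite $S$, transition probabilities $P\colon S\to\mathrm{Distr}(S)$ with $P(s,A)=\sum_{a\in A}P(s,a)$, exit rates $E\colon S\to\mathbb{R}_{>0}$, initial state, labeling. For $R\subseteq S\times S$ and $A\subseteq S$, $R(A)=\{t\mid\exists a\in A:(a,t)\in R\}$. For $\tau\geq0$, a partition $\Omega=\{\Omega_1,\dots,\Omega_m\}$ of $S$ is a $\tau$-quasi-lumpability if for all $i,j$ and all $s,s'\in\Omega_i$: $|P(s,\Omega_j)E(s)-P(s',\Omega_j)E(s')|\leq\tau$. *)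

theory Defs
  imports Complex_Main
begin

definition ctmc :: "'s set \<Rightarrow> ('s \<Rightarrow> 's \<Rightarrow> real) \<Rightarrow> ('s \<Rightarrow> real) \<Rightarrow> 's \<Rightarrow> ('s \<Rightarrow> 'l set) \<Rightarrow> bool" where
  "ctmc S P E s0 L \<longleftrightarrow>
     finite S \<and> s0 \<in> S \<and>
     (\<forall>s\<in>S. (\<forall>t. 0 \<le> P s t) \<and> (\<forall>t. t \<notin> S \<longrightarrow> P s t = 0) \<and> sum (P s) S = 1) \<and>
     (\<forall>s\<in>S. 0 < E s)"

definition Pset :: "'s set \<Rightarrow> ('s \<Rightarrow> 's \<Rightarrow> real) \<Rightarrow> 's \<Rightarrow> 's set \<Rightarrow> real" where
  "Pset S P s A = sum (P s) (A \<inter> S)"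

definition is_partition :: "'s set \<Rightarrow> 's set set \<Rightarrow> bool" where
  "is_partition S \<Omega> \<longleftrightarrow>
     (\<forall>B\<in>\<Omega>. B \<noteq> {} \<and> B \<subseteq> S) \<and> \<Union>\<Omega> = S \<and>
     (\<forall>B\<in>\<Omega>. \<forall>C\<in>\<Omega>. B \<noteq> C \<longrightarrow> B \<inter> C = {})"

definition quasi_lumpability :: "real \<Rightarrow> 's set \<Rightarrow> ('s \<Rightarrow> 's \<Rightarrow> real) \<Rightarrow> ('s \<Rightarrow> real) \<Rightarrow> 's set set \<Rightarrow> bool" where
  "quasi_lumpability \<tau> S P E \<Omega> \<longleftrightarrow>
     is_partition S \<Omega> \<and>
     (\<forall>Bi\<in>\<Omega>. \<forall>Bj\<in>\<Omega>. \<forall>s\<in>Bi. \<forall>s'\<in>Bi.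
        \<bar>Pset S P s Bj * E s - Pset S P s' Bj * E s'\<bar> \<le> \<tau>)"

definition induced_rel :: "'s set set \<Rightarrow> ('s \<times> 's) set" where
  "induced_rel \<Omega> = {(x, y). \<exists>B\<in>\<Omega>. x \<in> B \<and> y \<in> B}"

definition delta_condition :: "real \<Rightarrow> ('s \<Rightarrow> real) \<Rightarrow> 's \<Rightarrow> 's \<Rightarrow> bool" where
  "delta_condition \<delta> E s s' \<longleftrightarrow> \<bar>ln (E s) - ln (E s')\<bar> \<le> \<delta>"

definition eps_condition :: "real \<Rightarrow> 's set \<Rightarrow> ('s \<Rightarrow> 's \<Rightarrow> real) \<Rightarrow> ('s \<times> 's) set \<Rightarrow> 's \<Rightarrow> 's \<Rightarrow> bool" where
  "eps_condition \<epsilon> S P R s s' \<longleftrightarrow>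
     (\<forall>A\<subseteq>S. Pset S P s A \<le> Pset S P s' (R `` A) + \<epsilon>)"

end

theory Submission
  imports Defs
begin

text \<open>Quasi-lumpability only bounds, within each block, the differences of the rates
P(s, B) E(s), and each such rate lies between 0 and E(s); so once all exit rates are at most
\<tau>, every partition is a \<tau>-quasi-lumpability. A three-state chain in which s stays put while s' jumps out of its block, with exit
rates \<tau> and \<tau> exp(-2\<delta>), therefore violates both.\<close>

lemma Pset_nonneg:
  assumes "ctmc S P E s0 L" "s \<in> S"
  shows "0 \<le> Pset S P s A"
  using assms unfolding ctmc_def Pset_def by (simp add: sum_nonneg)

lemma Pset_le_one:
  assumes "ctmc S P E s0 L" "s \<in> S"
  shows "Pset S P s A \<le> 1"
proof -
  have "Pset S P s A \<le> sum (P s) S"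
    using assms unfolding ctmc_def Pset_def by (intro sum_mono2) auto
  also have "\<dots> = 1"
    using assms unfolding ctmc_def by simp
  finally show ?thesis .
qed

lemma quasi_lumpability_if_rates_le:
  assumes chain: "ctmc S P E s0 L"
    and rates: "\<And>s. s \<in> S \<Longrightarrow> E s \<le> \<tau>"
    and "is_partition S \<Omega>"
  shows "quasi_lumpability \<tau> S P E \<Omega>"
proof -
  have rate_bounds: "0 \<le> Pset S P s B * E s \<and> Pset S P s B * E s \<le> \<tau>" if "s \<in> S" for s B
  proof -
    have "0 < E s" using chain \<open>s \<in> S\<close> unfolding ctmc_def by blast
    have "Pset S P s B * E s \<le> 1 * E s"
      using Pset_le_one[OF chain \<open>s \<in> S\<close>] \<open>0 < E s\<close> by (intro mult_right_mono) auto
    moreover have "0 \<le> Pset S P s B * E s"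
      using Pset_nonneg[OF chain \<open>s \<in> S\<close>] \<open>0 < E s\<close> by simp
    ultimately show ?thesis
      using rates[OF \<open>s \<in> S\<close>] by linarith
  qed
  have "\<bar>Pset S P s B * E s - Pset S P s' B * E s'\<bar> \<le> \<tau>" if "s \<in> S" "s' \<in> S" for s s' B
    using rate_bounds[OF \<open>s \<in> S\<close>, of B] rate_bounds[OF \<open>s' \<in> S\<close>, of B] by linarith
  then show ?thesis
    using \<open>is_partition S \<Omega>\<close> unfolding quasi_lumpability_def is_partition_def by blast
qed

definition deterministic_trans :: "('s \<Rightarrow> 's) \<Rightarrow> 's \<Rightarrow> 's \<Rightarrow> real" where
  "deterministic_trans f s t = (if t = f s then 1 else 0)"

lemma ctmc_deterministic_trans:
  assumes "finite S" "s0 \<in> S" "f ` S \<subseteq> S" "\<And>s. s \<in> S \<Longrightarrow> 0 < E s"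
  shows "ctmc S (deterministic_trans f) E s0 L"
  using assms unfolding ctmc_def deterministic_trans_def by (auto simp: sum.delta')

lemma Pset_deterministic_trans:
  assumes "finite S"
  shows "Pset S (deterministic_trans f) s A = (if f s \<in> A \<inter> S then 1 else 0)"
  using assms unfolding Pset_def deterministic_trans_def by (simp add: sum.delta')

lemma not_eps_condition_deterministic_trans:
  assumes "finite S" "f s \<in> S" "(f s, f s') \<notin> R" "\<epsilon> < 1"
  shows "\<not> eps_condition \<epsilon> S (deterministic_trans f) R s s'"
proof
  assume "eps_condition \<epsilon> S (deterministic_trans f) R s s'"
  then have "Pset S (deterministic_trans f) s {f s}
      \<le> Pset S (deterministic_trans f) s' (R `` {f s}) + \<epsilon>"
    using \<open>f s \<in> S\<close> unfolding eps_condition_def by blast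
  with assms show False by (simp add: Pset_deterministic_trans)
qed

lemma not_delta_condition_if_rate_ratio:
  assumes "0 < E s" "E s' = E s * exp (- c)" "\<delta> < c"
  shows "\<not> delta_condition \<delta> E s s'"
  using assms unfolding delta_condition_def by (simp add: ln_mult)

theorem proposition2:
  fixes \<epsilon> \<delta> \<tau> :: real
  assumes "0 < \<epsilon>" "\<epsilon> < 1" "0 < \<delta>" "0 < \<tau>"
  shows "\<exists>(S :: nat set) P E s0 (L :: nat \<Rightarrow> nat set) \<Omega> s s'.
           ctmc S P E s0 L \<and> quasi_lumpability \<tau> S P E \<Omega> \<and> {s, s'} \<in> \<Omega> \<and>
           \<not> delta_condition \<delta> E s s' \<and>
           \<not> eps_condition \<epsilon> S P (induced_rel \<Omega>) s s'"
proof -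
  define S :: "nat set" where "S = {0, 1, 2}"
  define f :: "nat \<Rightarrow> nat" where "f s = (if s = 0 then 0 else 2)" for s
  define E :: "nat \<Rightarrow> real" where "E s = (if s = 1 then \<tau> * exp (- 2 * \<delta>) else \<tau>)" for s
  define \<Omega> :: "nat set set" where "\<Omega> = {{0, 1}, {2}}"
  have chain: "ctmc S (deterministic_trans f) E 0 (\<lambda>_. {})"
    using \<open>0 < \<tau>\<close> by (intro ctmc_deterministic_trans) (auto simp: S_def f_def E_def)
  have "E s \<le> \<tau>" for s
    using \<open>0 < \<tau>\<close> \<open>0 < \<delta>\<close> by (simp add: E_def mult_le_cancel_left1)
  moreover have "is_partition S \<Omega>"
    unfolding is_partition_def S_def \<Omega>_def by auto
  ultimately have "quasi_lumpability \<tau> S (deterministic_trans f) E \<Omega>"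
    using chain by (intro quasi_lumpability_if_rates_le)
  moreover have "\<not> delta_condition \<delta> E 0 1"
    using \<open>0 < \<tau>\<close> \<open>0 < \<delta>\<close> by (intro not_delta_condition_if_rate_ratio[where c = "2 * \<delta>"])
      (auto simp: E_def)
  moreover have "\<not> eps_condition \<epsilon> S (deterministic_trans f) (induced_rel \<Omega>) 0 1"
    using \<open>\<epsilon> < 1\<close> by (intro not_eps_condition_deterministic_trans)
      (auto simp: S_def f_def induced_rel_def \<Omega>_def)
  ultimately show ?thesis
    using chain unfolding \<Omega>_def by blast
qed

end
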